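(* Let $\mathcal{N}$ be a 2-step nilpotent Lie algebra over $\mathbb{R}$ whose commutator ideal $\mathcal{Z}=[\mathcal{N},\mathcal{N}]$ coincides with its center, and let $\mathcal{N}=\mathcal{V}\oplus\mathcal{Z}$ for a subspace $\mathcal{V}$. Suppose that every Lie ring automorphism $f$ of $\mathcal{N}$ with $f(\mathcal{V})=\mathcal{V}$ is a Lie algebra automorphism. Then for every Lie ring automorphism $f$ of $\mathcal{N}$ there exist a central automorphism $\mu$ and a Lie algebra automorphism $\overline{f}$ of $\mathcal{N}$ such that $f=\mu\circ\overline{f}$.
   Context: A Lie ring automorphism of a real Lie algebra is a bijective additive map preserving the bracket (not necessarily $\mathbb{R}$-linear); a Lie algebra automorphism is an $\mathbb{R}$-linear one. A central automorphism is a Lie ring automorphism $\mu$ with $\mu(x)-x$ in the center of $\mathcal{N}$ for all $x\in\mathcal{N}$. *)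

theory Defs
  imports Main Complex_Main
begin

definition lie_algebra :: "('a::real_vector \<Rightarrow> 'a \<Rightarrow> 'a) \<Rightarrow> bool" where
  "lie_algebra br \<longleftrightarrow>
     (\<forall>x y z. br (x + y) z = br x z + br y z) \<and>
     (\<forall>x y z. br x (y + z) = br x y + br x z) \<and>
     (\<forall>a x y. br (a *\<^sub>R x) y = a *\<^sub>R br x y) \<and>
     (\<forall>a x y. br x (a *\<^sub>R y) = a *\<^sub>R br x y) \<and>
     (\<forall>x. br x x = 0) \<and>
     (\<forall>x y z. br x (br y z) + br y (br z x) + br z (br x y) = 0)"

definition lie_center :: "('a::real_vector \<Rightarrow> 'a \<Rightarrow> 'a) \<Rightarrow> 'a set" where
  "lie_center br = {z. \<forall>x. br z x = 0}"

definition commutator_ideal :: "('a::real_vector \<Rightarrow> 'a \<Rightarrow> 'a) \<Rightarrow> 'a set" where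
  "commutator_ideal br = span {br x y | x y. True}"

definition two_step_nilpotent :: "('a::real_vector \<Rightarrow> 'a \<Rightarrow> 'a) \<Rightarrow> bool" where
  "two_step_nilpotent br \<longleftrightarrow>
     (\<forall>x y z. br x (br y z) = 0) \<and> (\<exists>x y. br x y \<noteq> 0)"

definition lie_ring_aut :: "('a::real_vector \<Rightarrow> 'a \<Rightarrow> 'a) \<Rightarrow> ('a \<Rightarrow> 'a) \<Rightarrow> bool" where
  "lie_ring_aut br f \<longleftrightarrow> bij f \<and> (\<forall>x y. f (x + y) = f x + f y) \<and>
     (\<forall>x y. f (br x y) = br (f x) (f y))"

definition lie_algebra_aut :: "('a::real_vector \<Rightarrow> 'a \<Rightarrow> 'a) \<Rightarrow> ('a \<Rightarrow> 'a) \<Rightarrow> bool" where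
  "lie_algebra_aut br f \<longleftrightarrow> lie_ring_aut br f \<and> linear f"

definition central_aut :: "('a::real_vector \<Rightarrow> 'a \<Rightarrow> 'a) \<Rightarrow> ('a \<Rightarrow> 'a) \<Rightarrow> bool" where
  "central_aut br \<mu> \<longleftrightarrow> lie_ring_aut br \<mu> \<and> (\<forall>x. \<mu> x - x \<in> lie_center br)"

end

theory Submission
  imports Defs
begin

text \<open>Every Lie ring automorphism \<open>f\<close> maps the centre \<open>Z\<close> onto itself, so it is block
  lower-triangular with respect to \<open>N = V \<oplus> Z\<close>. Dropping its off-diagonal block \<open>V \<rightarrow> Z\<close>
  gives an additive bijection \<open>g\<close> with \<open>g V = V\<close>; since \<open>f - g\<close> takes central values and all
  brackets lie in \<open>Z\<close>, \<open>g\<close> still preserves the bracket. By hypothesis \<open>g\<close> is then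
  \<open>\<real>\<close>-linear, and \<open>f \<circ> g\<^sup>-\<^sup>1\<close> differs from the identity by central values.\<close>

lemma lie_ring_aut_additive: "lie_ring_aut br f \<Longrightarrow> additive f"
  unfolding lie_ring_aut_def additive_def by blast

lemma lie_ring_aut_comp:
  "lie_ring_aut br f \<Longrightarrow> lie_ring_aut br g \<Longrightarrow> lie_ring_aut br (f \<circ> g)"
  unfolding lie_ring_aut_def by (auto intro: bij_comp)

lemma lie_ring_aut_inv:
  assumes "lie_ring_aut br f"
  shows "lie_ring_aut br (inv f)"
proof -
  have bij: "bij f" and add: "\<And>x y. f (x + y) = f x + f y"
    and bracket: "\<And>x y. f (br x y) = br (f x) (f y)"
    using assms unfolding lie_ring_aut_def by blast+
  have f_inv: "f (inv f x) = x" for x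
    using bij by (simp add: bij_is_surj surj_f_inv_f)
  have inv_f: "inv f (f x) = x" for x
    using bij by (simp add: bij_is_inj)
  have "inv f (x + y) = inv f x + inv f y" for x y
    using inv_f[of "inv f x + inv f y"] by (simp add: add f_inv)
  moreover have "inv f (br x y) = br (inv f x) (inv f y)" for x y
    using inv_f[of "br (inv f x) (inv f y)"] by (simp add: bracket f_inv)
  ultimately show ?thesis
    using bij bij_imp_bij_inv unfolding lie_ring_aut_def by blast
qed

lemma lie_ring_aut_center_mem:
  assumes "lie_ring_aut br f" "z \<in> lie_center br"
  shows "f z \<in> lie_center br"
proof -
  have "br (f z) (f x) = 0" for x
  proof -
    have "br (f z) (f x) = f (br z x)"
      using assms(1) unfolding lie_ring_aut_def by simp
    also have "\<dots> = 0"
      using assms(2) additive.zero[OF lie_ring_aut_additive[OF assms(1)]]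
      unfolding lie_center_def by simp
    finally show ?thesis .
  qed
  moreover have "surj f"
    using assms(1) unfolding lie_ring_aut_def by (simp add: bij_is_surj)
  ultimately have "br (f z) y = 0" for y
    by (metis surjD)
  then show ?thesis
    unfolding lie_center_def by simp
qed

lemma lie_ring_aut_image_center:
  assumes "lie_ring_aut br f"
  shows "f ` lie_center br = lie_center br"
proof
  show "f ` lie_center br \<subseteq> lie_center br"
    using lie_ring_aut_center_mem[OF assms] by blast
  show "lie_center br \<subseteq> f ` lie_center br"
  proof
    fix z assume "z \<in> lie_center br"
    then have "inv f z \<in> lie_center br"
      using lie_ring_aut_center_mem[OF lie_ring_aut_inv[OF assms]] by blast
    moreover have "z = f (inv f z)"
      using assms unfolding lie_ring_aut_def by (simp add: bij_is_surj surj_f_inv_f)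
    ultimately show "z \<in> f ` lie_center br" by blast
  qed
qed

lemma lie_bracket_swap:
  assumes "lie_algebra br"
  shows "br y x = - br x y"
proof -
  have add_left: "\<And>x y z. br (x + y) z = br x z + br y z"
    and add_right: "\<And>x y z. br x (y + z) = br x y + br x z"
    and alt: "\<And>x. br x x = 0"
    using assms unfolding lie_algebra_def by blast+
  have "br (x + y) (x + y) = br x x + br x y + (br y x + br y y)"
    by (simp add: add_left add_right)
  then have "br x y + br y x = 0" by (simp add: alt)
  then show ?thesis by (metis add.commute eq_neg_iff_add_eq_0)
qed

lemma lie_bracket_add_center:
  assumes "lie_algebra br" "c \<in> lie_center br" "d \<in> lie_center br"
  shows "br (a + c) (b + d) = br a b"
proof -
  have "br (a + c) (b + d) = br a b + br a d + (br c b + br c d)"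
    using assms(1) unfolding lie_algebra_def by simp
  moreover have "br a d = 0"
    using assms(3) lie_bracket_swap[OF assms(1), of d a] unfolding lie_center_def by simp
  moreover have "br c b = 0" "br c d = 0"
    using assms(2) unfolding lie_center_def by blast+
  ultimately show ?thesis by simp
qed

lemma central_aut_comp_inv:
  assumes "lie_ring_aut br f" "lie_ring_aut br g" "\<And>x. f x - g x \<in> lie_center br"
  shows "central_aut br (f \<circ> inv g)"
proof -
  have "g (inv g x) = x" for x
    using assms(2) unfolding lie_ring_aut_def by (simp add: bij_is_surj surj_f_inv_f)
  then have "(f \<circ> inv g) x - x \<in> lie_center br" for x
    using assms(3)[of "inv g x"] by simp
  then show ?thesis
    unfolding central_aut_def using lie_ring_aut_comp[OF assms(1) lie_ring_aut_inv[OF assms(2)]]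
    by blast
qed

locale complementary_subspaces =
  fixes V Z :: "'a::real_vector set"
  assumes subspace_V: "subspace V"
    and subspace_Z: "subspace Z"
    and V_inter_Z: "V \<inter> Z = {0}"
    and V_plus_Z: "{v + z | v z. v \<in> V \<and> z \<in> Z} = UNIV"
begin

lemma mem_V_Z_eq_0: "v \<in> V \<Longrightarrow> v \<in> Z \<Longrightarrow> v = 0"
  using V_inter_Z by blast

definition proj :: "'a \<Rightarrow> 'a" where
  "proj x = (SOME v. v \<in> V \<and> x - v \<in> Z)"

lemma proj_in_V: "proj x \<in> V" and diff_proj_in_Z: "x - proj x \<in> Z"
proof -
  obtain v z where "v \<in> V" "z \<in> Z" "x = v + z"
    using V_plus_Z by blast
  then have "\<exists>v. v \<in> V \<and> x - v \<in> Z" by auto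
  then show "proj x \<in> V" "x - proj x \<in> Z"
    unfolding proj_def by (metis (mono_tags, lifting) someI_ex)+
qed

lemma proj_unique: "v \<in> V \<Longrightarrow> x - v \<in> Z \<Longrightarrow> proj x = v"
proof -
  assume v: "v \<in> V" "x - v \<in> Z"
  have "proj x - v \<in> V"
    using subspace_V v(1) proj_in_V by (simp add: subspace_diff)
  moreover have "proj x - v = (x - v) - (x - proj x)" by simp
  then have "proj x - v \<in> Z"
    using subspace_Z v(2) diff_proj_in_Z by (metis subspace_diff)
  ultimately have "proj x - v = 0" by (rule mem_V_Z_eq_0)
  then show "proj x = v" by simp
qed

lemma proj_V: "v \<in> V \<Longrightarrow> proj v = v"
  using subspace_Z by (simp add: proj_unique subspace_0)

lemma proj_Z: "z \<in> Z \<Longrightarrow> proj z = 0"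
  using subspace_V by (simp add: proj_unique subspace_0)

lemma additive_proj: "additive proj"
proof
  fix x y
  have "x + y - (proj x + proj y) = (x - proj x) + (y - proj y)" by simp
  then have "x + y - (proj x + proj y) \<in> Z"
    using subspace_Z diff_proj_in_Z by (metis subspace_add)
  then show "proj (x + y) = proj x + proj y"
    using subspace_V proj_in_V by (simp add: proj_unique subspace_add)
qed

text \<open>For \<open>f\<close> mapping \<open>Z\<close> into itself, \<open>block_diag f\<close> keeps the diagonal blocks
  \<open>V \<rightarrow> V\<close> and \<open>Z \<rightarrow> Z\<close> of \<open>f\<close> and drops its block \<open>V \<rightarrow> Z\<close>.\<close>

definition block_diag :: "('a \<Rightarrow> 'a) \<Rightarrow> 'a \<Rightarrow> 'a" where
  "block_diag f x = proj (f (proj x)) + f (x - proj x)"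

context
  fixes f :: "'a \<Rightarrow> 'a"
  assumes additive_f: "additive f"
begin

lemma block_diag_V: "v \<in> V \<Longrightarrow> block_diag f v = proj (f v)"
  unfolding block_diag_def by (simp add: proj_V additive.zero[OF additive_f])

lemma block_diag_Z: "z \<in> Z \<Longrightarrow> block_diag f z = f z"
  unfolding block_diag_def
  by (simp add: proj_Z additive.zero[OF additive_f] additive.zero[OF additive_proj])

lemma additive_block_diag: "additive (block_diag f)"
proof
  fix x y
  have "x + y - proj (x + y) = (x - proj x) + (y - proj y)"
    by (simp add: additive.add[OF additive_proj])
  then have "f (x + y - proj (x + y)) = f (x - proj x) + f (y - proj y)"
    by (simp only: additive.add[OF additive_f])
  then show "block_diag f (x + y) = block_diag f x + block_diag f y"
    unfolding block_diag_def
    by (simp add: additive.add[OF additive_proj] additive.add[OF additive_f] algebra_simps)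
qed

lemma diff_block_diag_in_Z: "f x - block_diag f x \<in> Z"
proof -
  have "f x = f (proj x) + f (x - proj x)"
    using additive.add[OF additive_f, of "proj x" "x - proj x"] by simp
  then have "f x - block_diag f x = f (proj x) - proj (f (proj x))"
    unfolding block_diag_def by (simp add: algebra_simps)
  then show ?thesis using diff_proj_in_Z by simp
qed

context
  assumes bij_f: "bij f" and f_Z: "f ` Z = Z"
begin

lemma inj_block_diag: "inj (block_diag f)"
proof -
  have f_Z_mem: "z \<in> Z \<Longrightarrow> f z \<in> Z" for z using f_Z by blast
  have kernel: "x = 0" if "block_diag f x = 0" for x
  proof -
    have "proj (f (proj x)) = - f (x - proj x)"
      using that unfolding block_diag_def by (simp add: eq_neg_iff_add_eq_0)
    moreover have "- f (x - proj x) \<in> Z"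
      using f_Z_mem[OF diff_proj_in_Z] subspace_Z by (simp add: subspace_neg)
    ultimately have proj_f: "proj (f (proj x)) = 0"
      using mem_V_Z_eq_0 proj_in_V by metis
    then have "f (x - proj x) = 0"
      using that unfolding block_diag_def by simp
    then have x_eq: "x = proj x"
      using bij_f additive.zero[OF additive_f] by (metis bij_pointE eq_iff_diff_eq_0)
    have "f (proj x) \<in> Z"
      using diff_proj_in_Z[of "f (proj x)"] proj_f by simp
    then have "proj x \<in> Z"
      using f_Z bij_f by (metis bij_is_inj image_iff inj_eq)
    then show "x = 0"
      using x_eq mem_V_Z_eq_0 proj_in_V by metis
  qed
  show ?thesis
  proof (rule injI)
    fix x y assume "block_diag f x = block_diag f y"
    then have "block_diag f (x - y) = 0" by (simp add: additive.diff[OF additive_block_diag])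
    then have "x - y = 0" by (rule kernel)
    then show "x = y" by simp
  qed
qed

lemma V_subset_image_block_diag: "V \<subseteq> block_diag f ` V"
proof
  fix v assume v: "v \<in> V"
  obtain u where u: "f u = v" using bij_f by (metis bij_pointE)
  have "u - proj u \<in> Z" by (rule diff_proj_in_Z)
  then have "f (u - proj u) \<in> Z" using f_Z by blast
  moreover have "f (proj u) - v = - f (u - proj u)"
    using u additive.diff[OF additive_f, of u "proj u"] by simp
  ultimately have "proj (f (proj u)) = v"
    using v subspace_Z by (simp add: proj_unique subspace_neg)
  then show "v \<in> block_diag f ` V"
    using block_diag_V proj_in_V by (metis image_eqI)
qed

lemma block_diag_image_V: "block_diag f ` V = V"
proof
  show "block_diag f ` V \<subseteq> V"
    by (auto simp: block_diag_V proj_in_V)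
  show "V \<subseteq> block_diag f ` V"
    by (rule V_subset_image_block_diag)
qed

lemma bij_block_diag: "bij (block_diag f)"
proof -
  have "y \<in> range (block_diag f)" for y
  proof -
    have "proj y \<in> block_diag f ` V"
      using V_subset_image_block_diag proj_in_V by (rule subsetD)
    then obtain a where a: "block_diag f a = proj y" by (rule imageE) simp
    have "y - proj y \<in> f ` Z"
      using f_Z diff_proj_in_Z by simp
    then obtain w where w: "w \<in> Z" "f w = y - proj y" by (rule imageE) simp
    have "block_diag f (a + w) = y"
      using a w block_diag_Z by (simp add: additive.add[OF additive_block_diag])
    then show ?thesis by (metis rangeI)
  qed
  then show ?thesis using inj_block_diag by (auto simp: bij_def)
qed

end

end

text \<open>Brackets only see \<open>f\<close> modulo the centre, so they do not notice the dropped block.\<close>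

lemma lie_ring_aut_block_diag:
  assumes "lie_algebra br" "Z = lie_center br" "\<And>x y. br x y \<in> Z"
    and "lie_ring_aut br f"
  shows "lie_ring_aut br (block_diag f)"
proof -
  have additive_f: "additive f" by (rule lie_ring_aut_additive[OF assms(4)])
  have "block_diag f (br x y) = br (block_diag f x) (block_diag f y)" for x y
  proof -
    have "block_diag f (br x y) = br (f x) (f y)"
      using block_diag_Z[OF additive_f assms(3)] assms(4) unfolding lie_ring_aut_def by simp
    also have "\<dots> = br (block_diag f x + (f x - block_diag f x))
                        (block_diag f y + (f y - block_diag f y))"
      by simp
    also have "\<dots> = br (block_diag f x) (block_diag f y)"
      using diff_block_diag_in_Z[OF additive_f] assms(2)
      by (intro lie_bracket_add_center[OF assms(1)]) simp_all
    finally show ?thesis .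
  qed
  moreover have "bij (block_diag f)"
    using bij_block_diag[OF additive_f] assms(2,4) lie_ring_aut_image_center
    unfolding lie_ring_aut_def by blast
  ultimately show ?thesis
    using additive.add[OF additive_block_diag[OF additive_f]] unfolding lie_ring_aut_def by blast
qed

end

theorem proposition3p2:
  fixes br :: "'a::real_vector \<Rightarrow> 'a \<Rightarrow> 'a" and V :: "'a set"
  assumes "lie_algebra br"
    and "two_step_nilpotent br"
    and "commutator_ideal br = lie_center br"
    and "subspace V"
    and "V \<inter> commutator_ideal br = {0}"
    and "{v + z | v z. v \<in> V \<and> z \<in> commutator_ideal br} = UNIV"
    and "\<forall>f. lie_ring_aut br f \<and> f ` V = V \<longrightarrow> lie_algebra_aut br f"
  shows "\<forall>f. lie_ring_aut br f \<longrightarrow>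
           (\<exists>\<mu> g. central_aut br \<mu> \<and> lie_algebra_aut br g \<and> f = \<mu> \<circ> g)"
proof (intro allI impI)
  fix f assume f: "lie_ring_aut br f"
  have "subspace (lie_center br)"
    using assms(3) subspace_span unfolding commutator_ideal_def by metis
  then interpret complementary_subspaces V "lie_center br"
    using assms(3-6) by unfold_locales simp_all
  have brackets_central: "br x y \<in> lie_center br" for x y
    using assms(3) unfolding commutator_ideal_def
    by (metis (mono_tags, lifting) mem_Collect_eq span_base)
  define g where "g = block_diag f"
  have g: "lie_ring_aut br g"
    unfolding g_def using lie_ring_aut_block_diag[OF assms(1) refl brackets_central f] .
  have "g ` V = V"
    unfolding g_def using block_diag_image_V lie_ring_aut_additive[OF f] f lie_ring_aut_image_center
    unfolding lie_ring_aut_def by blast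
  then have "lie_algebra_aut br g" using assms(7) g by blast
  moreover have "central_aut br (f \<circ> inv g)"
    using central_aut_comp_inv[OF f g] diff_block_diag_in_Z[OF lie_ring_aut_additive[OF f]]
    unfolding g_def by blast
  moreover have "f = (f \<circ> inv g) \<circ> g"
    using g unfolding lie_ring_aut_def by (simp add: bij_is_inj fun_eq_iff)
  ultimately show "\<exists>\<mu> g. central_aut br \<mu> \<and> lie_algebra_aut br g \<and> f = \<mu> \<circ> g" by blast
qed

end
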